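(* Let $q$ be a power of an odd prime, write $q-1=2^s r$ with $r$ odd, let $c\in\mathbb{F}_q^*$, and $f(X)=c(X^{q+1}+X^2)$ on $\mathbb{F}_{q^2}$. Then for every divisor $d\neq1$ of $r$ there are $\frac{q\,\varphi(d)}{\mathrm{ord}_d(2)}$ cycles of length $\mathrm{ord}_d(2)$ in the functional graph of $f$, and these are all the cycles of length greater than $1$. For $d=1$ there are $\frac{q\,\varphi(1)}{\mathrm{ord}_1(2)}+1=q+1$ cycles of length $\mathrm{ord}_1(2)=1$.
   Context: The functional graph of $f$ is the directed graph on $\mathbb{F}_{q^2}$ with edges $x\to f(x)$. $\varphi$ is Euler's totient function and $\mathrm{ord}_m(n)$ is the multiplicative order of $n$ modulo $m$. *)

theory Defs
  imports "HOL-Number_Theory.Number_Theory"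
begin

definition cycles_of_length :: "('a \<Rightarrow> 'a) \<Rightarrow> nat \<Rightarrow> 'a set set" where
  "cycles_of_length f n =
     {{(f ^^ i) x | i. i < n} | x. 0 < n \<and> (f ^^ n) x = x \<and>
                                (\<forall>m. 0 < m \<and> m < n \<longrightarrow> (f ^^ m) x \<noteq> x)}"

end

theory Submission
  imports
    Defs
    "HOL-Library.Cardinality"
    "HOL-Computational_Algebra.Polynomial"
    "HOL-Combinatorics.Orbits"
    "HOL-Decision_Procs.Algebra_Aux"
begin

(* Let T x = x^q + x be the trace of F_(q^2) over F_q. Then f x = x * u x with u = c * T, and u
   takes values in F_q, so u (f x) = (u x)^2 and f^m x = x * (u x)^(2^m - 1). A point x with
   u x of multiplicative order d therefore returns to itself after m steps iff 2^m = 1 (mod d):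
   its exact period is ord_d(2), where d divides q - 1 and is odd, hence divides r. The other
   points are 0, which is fixed, and the nonzero points with u x = 0, which are not periodic.
   As T maps F_(q^2) onto F_q with kernel of size q, each of the phi(d) elements of order d in
   F_q^* has q preimages under u; so there are q phi(d) points of period ord_d(2). *)

definition points_of_period :: "('a \<Rightarrow> 'a) \<Rightarrow> nat \<Rightarrow> 'a set" where
  "points_of_period f n = {x. (f ^^ n) x = x \<and> (\<forall>m. 0 < m \<and> m < n \<longrightarrow> (f ^^ m) x \<noteq> x)}"

lemma card_orbit_eq_funpow_dist1:
  assumes "x \<in> orbit f x"
  shows "card (orbit f x) = funpow_dist1 f x x"
  using inj_on_funpow_dist1[OF assms] by (simp add: orbit_conv_funpow_dist1[OF assms] card_image)

lemma points_of_period_iff_card_orbit: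
  assumes "0 < n"
  shows "x \<in> points_of_period f n \<longleftrightarrow> x \<in> orbit f x \<and> card (orbit f x) = n"
proof
  assume x: "x \<in> points_of_period f n"
  then have self: "x \<in> orbit f x"
    using assms by (auto simp: points_of_period_def orbit_altdef intro!: exI[of _ n])
  have "funpow_dist1 f x x \<le> n"
    using x assms self by (intro funpow_dist1_le_self) (auto simp: points_of_period_def)
  moreover have "\<not> funpow_dist1 f x x < n"
    using x funpow_dist1_prop[OF self] by (auto simp: points_of_period_def)
  ultimately show "x \<in> orbit f x \<and> card (orbit f x) = n"
    using self by (simp add: card_orbit_eq_funpow_dist1)
next
  assume "x \<in> orbit f x \<and> card (orbit f x) = n"
  then have self: "x \<in> orbit f x" and dist: "funpow_dist1 f x x = n"
    by (auto simp: card_orbit_eq_funpow_dist1)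
  show "x \<in> points_of_period f n"
    using funpow_dist1_prop[OF self] funpow_dist1_least[of _ f x x]
    unfolding points_of_period_def dist by blast
qed

lemma points_of_period_iff_dvd:
  assumes "\<And>m. (f ^^ m) x = x \<longleftrightarrow> e dvd m" and "0 < n"
  shows "x \<in> points_of_period f n \<longleftrightarrow> e = n"
proof
  assume x: "x \<in> points_of_period f n"
  then have "e dvd n"
    using assms by (simp add: points_of_period_def)
  then have "0 < e" "e \<le> n"
    using assms(2) by (auto intro: Nat.gr0I dest: dvd_imp_le)
  moreover have "\<not> e < n"
    using x \<open>0 < e\<close> assms(1)[of e] by (auto simp: points_of_period_def)
  ultimately show "e = n" by simp
qed (use assms in \<open>auto simp: points_of_period_def dest: dvd_imp_le\<close>)

lemma cycles_of_length_eq_orbits: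
  assumes "0 < n"
  shows "cycles_of_length f n = orbit f ` points_of_period f n"
proof -
  have "cycles_of_length f n = (\<lambda>x. {(f ^^ i) x | i. i < n}) ` points_of_period f n"
    using assms by (auto simp: cycles_of_length_def points_of_period_def)
  also have "\<dots> = orbit f ` points_of_period f n"
    using assms by (intro image_cong refl) (auto simp: points_of_period_def orbit_altdef_bounded)
  finally show ?thesis .
qed

lemma orbit_eq_if_mem_orbit:
  assumes "x \<in> orbit f x" and "y \<in> orbit f x"
  shows "orbit f y = orbit f x"
  by (rule orbit_cyclic_eq3[OF cyclic_on_singleI[OF assms(1) refl] assms(2)])

lemma Union_cycles_of_length:
  assumes "0 < n"
  shows "\<Union> (cycles_of_length f n) = points_of_period f n"
proof (intro equalityI subsetI)
  fix y assume "y \<in> \<Union> (cycles_of_length f n)"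
  then obtain x where "x \<in> points_of_period f n" "y \<in> orbit f x"
    using assms by (auto simp: cycles_of_length_eq_orbits)
  then show "y \<in> points_of_period f n"
    using assms orbit_eq_if_mem_orbit by (metis points_of_period_iff_card_orbit)
next
  fix x assume "x \<in> points_of_period f n"
  then show "x \<in> \<Union> (cycles_of_length f n)"
    using assms by (auto simp: cycles_of_length_eq_orbits points_of_period_iff_card_orbit)
qed

lemma card_points_of_period:
  assumes "finite (points_of_period f n)" and "0 < n"
  shows "card (points_of_period f n) = n * card (cycles_of_length f n)"
proof -
  have "n * card (cycles_of_length f n) = card (\<Union> (cycles_of_length f n))"
  proof (rule card_partition)
    show "finite (cycles_of_length f n)"
      using assms by (simp add: cycles_of_length_eq_orbits)
    show "finite (\<Union> (cycles_of_length f n))"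
      using assms by (simp add: Union_cycles_of_length)
    show "card C = n" if "C \<in> cycles_of_length f n" for C
      using that assms by (auto simp: cycles_of_length_eq_orbits points_of_period_iff_card_orbit)
  next
    fix C D assume C: "C \<in> cycles_of_length f n" and D: "D \<in> cycles_of_length f n" and "C \<noteq> D"
    obtain x where x: "x \<in> orbit f x" "C = orbit f x"
      using C assms by (auto simp: cycles_of_length_eq_orbits points_of_period_iff_card_orbit)
    obtain y where y: "y \<in> orbit f y" "D = orbit f y"
      using D assms by (auto simp: cycles_of_length_eq_orbits points_of_period_iff_card_orbit)
    show "C \<inter> D = {}"
    proof (rule ccontr)
      assume "C \<inter> D \<noteq> {}"
      then obtain z where "z \<in> orbit f x" "z \<in> orbit f y"
        using x y by blast
      then have "C = D"
        using x y orbit_eq_if_mem_orbit by metis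
      with \<open>C \<noteq> D\<close> show False ..
    qed
  qed
  then show ?thesis
    using assms by (simp add: Union_cycles_of_length)
qed

lemma carrier_cring_class_ops: "carrier cring_class_ops = UNIV"
  by (simp add: cring_class_ops_def)

lemma field_cring_class_ops: "field (cring_class_ops :: 'a::field ring)"
proof (rule cring_class.cring_fieldI2)
  fix a :: 'a
  assume "a \<noteq> 0"
  then show "\<exists>b \<in> carrier cring_class_ops. a * b = 1"
    by (intro bexI[of _ "inverse a"]) (simp_all add: carrier_class)
qed simp

definition mult_order :: "'a::field \<Rightarrow> nat" where
  "mult_order x = group.ord (mult_of cring_class_ops) x"

lemma group_mult_of_cring_class_ops: "group (mult_of (cring_class_ops :: 'a::field ring))"
  by (rule field.field_mult_group[OF field_cring_class_ops])

lemma power_eq_one_iff_mult_order_dvd: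
  fixes x :: "'a::field"
  assumes "x \<noteq> 0"
  shows "x ^ n = 1 \<longleftrightarrow> mult_order x dvd n"
  using group.pow_eq_id[OF group_mult_of_cring_class_ops, of x n] assms
  by (simp add: mult_order_def nat_pow_mult_of class_simps)

lemma order_mult_of_cring_class_ops:
  "Coset.order (mult_of (cring_class_ops :: 'a::{finite,field} ring)) = CARD('a) - 1"
  by (simp add: Coset.order_def carrier_cring_class_ops class_simps card_Diff_singleton)

lemma power_card_eq_self:
  fixes x :: "'a::{finite,field}"
  shows "x ^ CARD('a) = x"
proof (cases "x = 0")
  case False
  then have "x ^ (CARD('a) - 1) = 1"
    using group.pow_order_eq_1[OF group_mult_of_cring_class_ops, of x]
    by (simp add: order_mult_of_cring_class_ops nat_pow_mult_of class_simps)
  then show ?thesis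
    using finite_UNIV_card_ge_0[where 'a='a] by (simp add: power_eq_if[of x])
qed simp

lemma card_mult_order_eq_totient:
  assumes "d dvd CARD('a::{finite,field}) - 1"
  shows "card {x :: 'a. x \<noteq> 0 \<and> mult_order x = d} = totient d"
proof -
  let ?R = "cring_class_ops :: 'a ring"
  let ?G = "mult_of ?R"
  interpret G: group ?G by (rule group_mult_of_cring_class_ops)
  have fin: "finite (carrier ?R)" by simp
  obtain a where a: "a \<in> carrier ?G" and gen: "carrier ?G = {a [^]\<^bsub>?G\<^esub> i | i::nat. i \<in> UNIV}"
    using field.finite_field_mult_group_has_gen[OF field_cring_class_ops fin]
    by (auto simp: nat_pow_mult_of)
  have "G.ord a \<noteq> 0"
    using G.ord_ge_1[OF _ a] by simp
  then have "generate ?G {a} = carrier ?G"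
    by (simp only: G.generate_pow_nat[OF a \<open>G.ord a \<noteq> 0\<close>] gen)
  then have ord_a: "G.ord a = CARD('a) - 1"
    using order_mult_of_cring_class_ops[where 'a='a] by (simp add: G.generate_pow_card[OF a] Coset.order_def)
  obtain k where k: "CARD('a) - 1 = d * k"
    using assms by (elim dvdE)
  have ord_a_eq: "G.ord a = d * k"
    using ord_a k by simp
  then have "0 < d" "0 < k"
    using \<open>G.ord a \<noteq> 0\<close> by simp_all
  then have "G.ord (a [^]\<^bsub>?G\<^esub> k) = d"
    using G.ord_pow[OF a, of k] ord_a_eq by simp
  then have "\<exists>b \<in> carrier ?G. G.ord b = d"
    using a by blast
  then have "card {b \<in> carrier ?G. G.ord b = d} = phi' d"
    using assms by (intro field.num_elems_of_ord_eq_phi'[OF field_cring_class_ops fin])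
      (simp_all add: order_mult_of_cring_class_ops)
  moreover have "phi' d = totient d"
    unfolding phi'_def totient_def totatives_def by (rule arg_cong[where f = card]) auto
  ultimately show ?thesis
    by (simp add: mult_order_def class_simps)
qed

locale quadratic_finite_field =
  fixes p k q :: nat
  assumes prime_p: "prime p" and q_eq: "q = p ^ k"
    and card_UNIV: "card (UNIV :: 'a::{finite,field} set) = q\<^sup>2"
begin

lemma one_less_q: "1 < q"
proof -
  have "card {0, 1 :: 'a} \<le> CARD('a)"
    by (rule card_mono) simp_all
  then have "1 < q\<^sup>2"
    by (simp add: card_UNIV)
  then show ?thesis
    using power_less_imp_less_base[of 1 2 q] by simp
qed

lemma CHAR_eq: "CHAR('a) = p"
proof -
  have "prime CHAR('a)"
    by (rule prime_CHAR_semidom) (simp add: finite_imp_CHAR_pos)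
  moreover have "CHAR('a) dvd p ^ (2 * k)"
    using CHAR_dvd_CARD[where 'a = 'a] by (simp add: card_UNIV q_eq power_mult mult.commute)
  ultimately show ?thesis
    using prime_p by (metis prime_dvd_power primes_dvd_imp_eq)
qed

lemma power_q_add: "(x + y :: 'a) ^ q = x ^ q + y ^ q"
  using prime_p by (simp add: q_eq freshmans_dream' CHAR_eq)

lemma power_q_power_q: "((x :: 'a) ^ q) ^ q = x"
  using power_card_eq_self[of x] by (simp add: card_UNIV power_mult[symmetric] power2_eq_square)

lemma card_roots_power_q_plus_linear: "card {x :: 'a. x ^ q + a * x = 0} \<le> q"
proof -
  define P :: "'a poly" where "P = monom 1 q + [:0, a:]"
  have "coeff P q = 1"
    using one_less_q by (simp add: P_def coeff_pCons split: nat.split)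
  moreover have "degree P \<le> q"
    unfolding P_def using one_less_q by (intro degree_add_le) (auto simp: degree_monom_le)
  moreover have "P \<noteq> 0"
    using \<open>coeff P q = 1\<close> by auto
  ultimately have "card {x. poly P x = 0} \<le> q"
    using card_poly_roots_bound[of P] by simp
  then show ?thesis
    by (simp add: P_def poly_monom mult.commute)
qed

definition trace :: "'a \<Rightarrow> 'a" where
  "trace x = x ^ q + x"

lemma trace_add: "trace (x + y) = trace x + trace y"
  by (simp add: trace_def power_q_add algebra_simps)

lemma trace_zero: "trace 0 = 0"
  using one_less_q by (simp add: trace_def)

lemma trace_power_q: "trace x ^ q = trace x"
  by (simp add: trace_def power_q_add power_q_power_q add.commute)

lemma trace_mult_subfield: "a ^ q = a \<Longrightarrow> trace (a * x) = a * trace x"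
  by (simp add: trace_def power_mult_distrib distrib_left)

lemma card_trace_fiber_eq_kernel: "card {x. trace x = trace x\<^sub>0} = card {x. trace x = 0}"
proof -
  have "{x. trace x = trace x\<^sub>0} = (\<lambda>z. z + x\<^sub>0) ` {x. trace x = 0}"
  proof (intro equalityI subsetI)
    fix x assume "x \<in> {x. trace x = trace x\<^sub>0}"
    then have "trace (x - x\<^sub>0) = 0"
      using trace_add[of "x - x\<^sub>0" x\<^sub>0] by simp
    then show "x \<in> (\<lambda>z. z + x\<^sub>0) ` {x. trace x = 0}"
      by (intro image_eqI[of _ _ "x - x\<^sub>0"]) auto
  qed (auto simp: trace_add)
  then show ?thesis
    by (simp add: card_image)
qed

lemma card_range_trace_mult_card_kernel:
  "card (range trace) * card {x. trace x = 0} = q * q"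
proof -
  have "(\<Union>y \<in> range trace. {x. trace x = y}) = UNIV"
    by auto
  then have "q\<^sup>2 = card (\<Union>y \<in> range trace. {x. trace x = y})"
    by (simp only: card_UNIV)
  also have "\<dots> = (\<Sum>y \<in> range trace. card {x. trace x = y})"
    by (rule card_UN_disjoint) auto
  also have "\<dots> = (\<Sum>y \<in> range trace. card {x. trace x = 0})"
    by (rule sum.cong) (auto simp: card_trace_fiber_eq_kernel)
  finally show ?thesis
    by (simp add: power2_eq_square)
qed

lemma range_trace_and_card_kernel:
  "range trace = {y. y ^ q = y} \<and> card {x. trace x = 0} = q"
proof -
  have sub: "range trace \<subseteq> {y. y ^ q = y}"
    using trace_power_q by auto
  have "card {y :: 'a. y ^ q = y} \<le> q"
    using card_roots_power_q_plus_linear[of "-1"] by simp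
  then have range_le: "card (range trace) \<le> q"
    using card_mono[OF _ sub] by simp
  have kernel_le: "card {x. trace x = 0} \<le> q"
    using card_roots_power_q_plus_linear[of 1] by (simp add: trace_def)
  have range_eq: "card (range trace) = q"
  proof (rule ccontr)
    assume "card (range trace) \<noteq> q"
    then have "card (range trace) < q"
      using range_le by simp
    have "card (range trace) * card {x. trace x = 0} \<le> card (range trace) * q"
      using kernel_le by (rule mult_le_mono2)
    also have "\<dots> < q * q"
      using \<open>card (range trace) < q\<close> one_less_q by simp
    finally show False
      using card_range_trace_mult_card_kernel by simp
  qed
  then have "card {x. trace x = 0} = q"
    using card_range_trace_mult_card_kernel one_less_q by simp
  with range_eq show ?thesis
    using sub \<open>card {y :: 'a. y ^ q = y} \<le> q\<close> by (metis card_seteq finite)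
qed

lemma card_trace_fiber:
  assumes "y ^ q = y"
  shows "card {x. trace x = y} = q"
proof -
  obtain x\<^sub>0 where "y = trace x\<^sub>0"
    using assms range_trace_and_card_kernel by blast
  then show ?thesis
    using card_trace_fiber_eq_kernel range_trace_and_card_kernel by simp
qed

end

lemma ord_pos_dvd_power_mult_imp_dvd:
  fixes a d r :: nat
  assumes "0 < ord d a" and "d dvd a ^ s * r"
  shows "d dvd r"
proof -
  have "coprime d (a ^ s)"
    using assms(1) by simp
  then show ?thesis
    using assms(2) coprime_dvd_mult_right_iff by blast
qed

locale quadratic_map = quadratic_finite_field p k q
  for p k q :: nat +
  fixes c :: "'a::{finite,field}"
  assumes c_nonzero: "c \<noteq> 0" and c_power_q: "c ^ q = c"
begin

definition F :: "'a \<Rightarrow> 'a" where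
  "F x = c * (x ^ (q + 1) + x\<^sup>2)"

definition multiplier :: "'a \<Rightarrow> 'a" where
  "multiplier x = c * trace x"

lemma F_eq_mult_multiplier: "F x = x * multiplier x"
  by (simp add: F_def multiplier_def trace_def power2_eq_square algebra_simps)

lemma multiplier_power_q: "multiplier x ^ q = multiplier x"
  by (simp add: multiplier_def power_mult_distrib trace_power_q c_power_q)

lemma multiplier_zero: "multiplier 0 = 0"
  by (simp add: multiplier_def trace_zero)

lemma multiplier_F: "multiplier (F x) = (multiplier x)\<^sup>2"
proof -
  have "multiplier (F x) = c * trace (multiplier x * x)"
    by (simp add: multiplier_def F_eq_mult_multiplier mult.commute)
  also have "\<dots> = c * (multiplier x * trace x)"
    by (simp add: trace_mult_subfield multiplier_power_q)
  finally show ?thesis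
    by (simp add: multiplier_def power2_eq_square algebra_simps)
qed

lemma multiplier_funpow_F: "multiplier ((F ^^ m) x) = multiplier x ^ 2 ^ m"
  by (induction m) (simp_all add: multiplier_F power_mult[symmetric] mult.commute)

lemma funpow_F: "(F ^^ m) x = x * multiplier x ^ (2 ^ m - 1)"
proof (induction m)
  case (Suc m)
  have "(F ^^ Suc m) x = (F ^^ m) x * multiplier ((F ^^ m) x)"
    by (simp add: F_eq_mult_multiplier)
  also have "\<dots> = x * multiplier x ^ (2 ^ m - 1) * multiplier x ^ 2 ^ m"
    by (subst multiplier_funpow_F) (simp only: Suc)
  also have "\<dots> = x * multiplier x ^ ((2 ^ m - 1) + 2 ^ m)"
    by (simp only: power_add mult.assoc)
  also have "(2 ^ m - 1) + 2 ^ m = (2::nat) ^ Suc m - 1"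
    using one_le_power[of "2::nat" m] by simp
  finally show ?case .
qed simp

lemma funpow_F_eq_self_iff:
  assumes "multiplier x \<noteq> 0"
  shows "(F ^^ m) x = x \<longleftrightarrow> ord (mult_order (multiplier x)) 2 dvd m"
proof -
  have "x \<noteq> 0"
    using assms multiplier_zero by auto
  then have "(F ^^ m) x = x \<longleftrightarrow> multiplier x ^ (2 ^ m - 1) = 1"
    by (simp add: funpow_F)
  also have "\<dots> \<longleftrightarrow> mult_order (multiplier x) dvd 2 ^ m - 1"
    using assms by (rule power_eq_one_iff_mult_order_dvd)
  also have "\<dots> \<longleftrightarrow> [2 ^ m = 1] (mod mult_order (multiplier x))"
    by (simp add: cong_altdef_nat)
  also have "\<dots> \<longleftrightarrow> ord (mult_order (multiplier x)) 2 dvd m"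
    by (rule ord_divides)
  finally show ?thesis .
qed

lemma points_of_period_F_iff:
  assumes "0 < n"
  shows "x \<in> points_of_period F n \<longleftrightarrow>
    x = 0 \<and> n = 1 \<or> multiplier x \<noteq> 0 \<and> ord (mult_order (multiplier x)) 2 = n"
proof (cases "multiplier x = 0")
  case True
  have "(F ^^ m) x = x \<longleftrightarrow> x = 0 \<or> m = 0" for m
  proof -
    have "(F ^^ m) x = 0" if "0 < m"
    proof -
      have "0 < (2::nat) ^ m - 1"
        using one_less_power[of "2::nat" m] that by simp
      then show ?thesis
        using True by (simp add: funpow_F zero_power)
    qed
    then show ?thesis
      by (cases "m = 0") auto
  qed
  then have "x \<in> points_of_period F n \<longleftrightarrow> x = 0 \<and> n = 1"
    using assms by (auto simp: points_of_period_def)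
  then show ?thesis
    using True by simp
next
  case False
  then show ?thesis
    using assms multiplier_zero by (auto simp: points_of_period_iff_dvd funpow_F_eq_self_iff)
qed

lemma mult_order_multiplier_dvd:
  assumes "multiplier x \<noteq> 0"
  shows "mult_order (multiplier x) dvd q - 1"
proof -
  have "multiplier x * multiplier x ^ (q - 1) = multiplier x * 1"
    using multiplier_power_q one_less_q by (simp add: power_eq_if[of _ q])
  then show ?thesis
    using assms by (simp add: power_eq_one_iff_mult_order_dvd)
qed

lemma card_multiplier_of_order:
  assumes "d dvd q - 1"
  shows "card {x. multiplier x \<noteq> 0 \<and> mult_order (multiplier x) = d} = q * totient d"
proof -
  let ?V = "{v :: 'a. v \<noteq> 0 \<and> mult_order v = d}"
  have fiber: "card {x. multiplier x = v} = q" if "v \<in> ?V" for v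
  proof -
    have "v ^ (q - 1) = 1"
      using that assms by (simp add: power_eq_one_iff_mult_order_dvd)
    then have "(v / c) ^ q = v / c"
      using one_less_q c_power_q by (simp add: power_divide power_eq_if[of _ q])
    moreover have "{x. multiplier x = v} = {x. trace x = v / c}"
      using c_nonzero by (auto simp: multiplier_def field_simps)
    ultimately show ?thesis
      by (simp add: card_trace_fiber)
  qed
  have "CARD('a) - 1 = (q - 1) * (q + 1)"
    using one_less_q by (cases q) (simp_all add: card_UNIV power2_eq_square algebra_simps)
  then have "q - 1 dvd CARD('a) - 1"
    by simp
  then have card_V: "card ?V = totient d"
    using assms by (intro card_mult_order_eq_totient) (rule dvd_trans)
  have "{x. multiplier x \<noteq> 0 \<and> mult_order (multiplier x) = d} = (\<Union>v \<in> ?V. {x. multiplier x = v})"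
    by auto
  also have "card \<dots> = (\<Sum>v \<in> ?V. card {x. multiplier x = v})"
    by (rule card_UN_disjoint) auto
  also have "\<dots> = q * totient d"
    using fiber card_V by simp
  finally show ?thesis .
qed

lemma card_points_of_period_F:
  assumes "q - 1 = 2 ^ s * r" and "0 < n"
  shows "card (points_of_period F n) = of_bool (n = 1) + (\<Sum>d | d dvd r \<and> ord d 2 = n. q * totient d)"
proof -
  define D where "D = {d. d dvd r \<and> ord d 2 = n}"
  define X where "X d = {x. multiplier x \<noteq> 0 \<and> mult_order (multiplier x) = d}" for d
  have "0 < r"
    using assms(1) one_less_q by (intro Nat.gr0I) simp
  then have "finite D"
    by (auto simp: D_def intro: finite_subset[of _ "{..r}"] dest: dvd_imp_le)
  have D_iff: "ord (mult_order (multiplier x)) 2 = n \<longleftrightarrow> mult_order (multiplier x) \<in> D"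
    if "multiplier x \<noteq> 0" for x
    using mult_order_multiplier_dvd[OF that] assms
    by (auto simp: D_def intro: ord_pos_dvd_power_mult_imp_dvd[where s = s])
  have "x \<in> points_of_period F n \<longleftrightarrow> x = 0 \<and> n = 1 \<or> (\<exists>d \<in> D. x \<in> X d)" for x
    using D_iff[of x] assms(2) by (auto simp: points_of_period_F_iff X_def)
  then have "points_of_period F n = (if n = 1 then {0} else {}) \<union> (\<Union>d \<in> D. X d)"
    by auto
  moreover have "0 \<notin> (\<Union>d \<in> D. X d)"
    by (simp add: X_def multiplier_zero)
  moreover have "card (\<Union>d \<in> D. X d) = (\<Sum>d \<in> D. q * totient d)"
  proof -
    have "card (\<Union>d \<in> D. X d) = (\<Sum>d \<in> D. card (X d))"
      using \<open>finite D\<close> by (intro card_UN_disjoint) (auto simp: X_def)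
    also have "\<dots> = (\<Sum>d \<in> D. q * totient d)"
      using assms(1) by (intro sum.cong refl) (auto simp: D_def X_def intro: card_multiplier_of_order)
    finally show ?thesis .
  qed
  ultimately show ?thesis
    unfolding D_def[symmetric] by (simp add: card_insert_if)
qed

lemma card_cycles_of_length_F:
  assumes "q - 1 = 2 ^ s * r" and "0 < n"
  shows "n * card (cycles_of_length F n) =
    of_bool (n = 1) + (\<Sum>d | d dvd r \<and> ord d 2 = n. q * totient d)"
  using card_points_of_period[of F n] card_points_of_period_F[OF assms] assms(2) by simp

end

theorem theorem17:
  fixes p k q s r :: nat and c :: "'a::{finite,field}"
  assumes "prime p" and "odd p" and "k \<ge> 1" and "q = p ^ k"
    and "card (UNIV::'a set) = q ^ 2"
    and "q - 1 = 2 ^ s * r" and "odd r"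
    and "c \<noteq> 0" and "c ^ q = c"
  defines "f \<equiv> (\<lambda>x::'a. c * (x ^ (q + 1) + x ^ 2))"
  shows "(\<forall>n>1. real (card (cycles_of_length f n)) =
            (\<Sum>d\<in>{d. d dvd r \<and> d \<noteq> 1 \<and> ord d 2 = n}. real q * real (totient d) / real n))
       \<and> card (cycles_of_length f 1) = q * totient 1 div ord 1 (2::nat) + 1
       \<and> card (cycles_of_length f 1) = q + 1 \<and> ord 1 (2::nat) = 1"
proof -
  interpret quadratic_map p k q c
    using assms by unfold_locales auto
  have "f = F"
    by (simp add: f_def F_def fun_eq_iff)
  then have card_cycles: "n * card (cycles_of_length f n) =
      of_bool (n = 1) + (\<Sum>d | d dvd r \<and> ord d 2 = n. q * totient d)" if "0 < n" for n
    using card_cycles_of_length_F[OF assms(6) that] by simp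
  have "{d. d dvd r \<and> ord d 2 = 1} = {1}"
    by (auto simp: ord_eq_Suc_0_iff cong_altdef_nat)
  then have "card (cycles_of_length f 1) = q + 1"
    using card_cycles[of 1] by simp
  moreover have "real (card (cycles_of_length f n)) =
      (\<Sum>d \<in> {d. d dvd r \<and> d \<noteq> 1 \<and> ord d 2 = n}. real q * real (totient d) / real n)"
    if "1 < n" for n
  proof -
    have "{d. d dvd r \<and> d \<noteq> 1 \<and> ord d 2 = n} = {d. d dvd r \<and> ord d 2 = n}"
      using that by auto
    moreover have "real n * real (card (cycles_of_length f n)) =
        (\<Sum>d | d dvd r \<and> ord d 2 = n. real q * real (totient d))"
      using arg_cong[OF card_cycles[of n], of real] that by simp
    ultimately show ?thesis
      using that by (simp add: sum_divide_distrib[symmetric] eq_divide_eq mult.commute)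
  qed
  ultimately show ?thesis
    by simp
qed

end
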